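(* Let ${\bm{x}}_i^m\in\mathbb{R}^d$ ($m\in[M]$, $i\in[n]$) satisfy $\|{\bm{x}}_i^m\|\le1$ and be linearly separable. Let $\ell(z)=\log(1+e^{-z})$, $F_m({\bm{w}})=\frac1n\sum_i\ell(\langle{\bm{w}},{\bm{x}}_i^m\rangle)$, $F=\frac1M\sum_mF_m$. Run Local GD with any ${\bm{w}}_0$, $\eta>0$, $K\in\mathbb{N}$: ${\bm{w}}_{r,0}^m={\bm{w}}_r$, ${\bm{w}}_{r,k+1}^m={\bm{w}}_{r,k}^m-\eta\nabla F_m({\bm{w}}_{r,k}^m)$ ($k=0,\dots,K-1$), ${\bm{w}}_{r+1}=\frac1M\sum_m{\bm{w}}_{r,K}^m$. If $F({\bm{w}}_r)\le1/(4\eta M)$ for some $r\ge0$, then for every $m\in[M]$, $F_m({\bm{w}}_{r,k}^m)$ is (non-increasing) decreasing in $k\in\{0,\dots,K\}$.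
   Context: Linear separability means there is ${\bm{w}}$ with $\langle{\bm{w}},{\bm{x}}_i^m\rangle>0$ for all $m,i$ (labels absorbed into data). *)

theory Defs
  imports "HOL-Analysis.Analysis"
begin

definition logloss :: "real \<Rightarrow> real" where
  "logloss z = ln (1 + exp (- z))"

definition Floc :: "nat \<Rightarrow> (nat \<Rightarrow> nat \<Rightarrow> 'a::real_inner) \<Rightarrow> nat \<Rightarrow> 'a \<Rightarrow> real" where
  "Floc n x m w = (1 / real n) * (\<Sum>i<n. logloss (w \<bullet> x m i))"

definition Fglob :: "nat \<Rightarrow> nat \<Rightarrow> (nat \<Rightarrow> nat \<Rightarrow> 'a::real_inner) \<Rightarrow> 'a \<Rightarrow> real" where
  "Fglob M n x w = (1 / real M) * (\<Sum>m<M. Floc n x m w)"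

definition grad :: "('a::real_inner \<Rightarrow> real) \<Rightarrow> 'a \<Rightarrow> 'a" where
  "grad f w = (SOME g. (f has_derivative (\<lambda>h. g \<bullet> h)) (at w))"

fun local_iter :: "real \<Rightarrow> ('a::real_inner \<Rightarrow> real) \<Rightarrow> 'a \<Rightarrow> nat \<Rightarrow> 'a" where
  "local_iter eta f w 0 = w"
| "local_iter eta f w (Suc k) =
     local_iter eta f w k - eta *\<^sub>R grad f (local_iter eta f w k)"

fun localGD :: "nat \<Rightarrow> nat \<Rightarrow> (nat \<Rightarrow> nat \<Rightarrow> 'a::real_inner) \<Rightarrow> real \<Rightarrow> nat \<Rightarrow> 'a \<Rightarrow> nat \<Rightarrow> 'a" where
  "localGD M n x eta K w0 0 = w0"
| "localGD M n x eta K w0 (Suc r) =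
     (1 / real M) *\<^sub>R (\<Sum>m<M. local_iter eta (Floc n x m) (localGD M n x eta K w0 r) K)"

end

theory Submission
  imports Defs
begin

text \<open>
  The logistic loss satisfies \<open>|\<ell>'| \<le> \<ell>\<close> and, since \<open>e < 3\<close>, \<open>\<ell>''(t) \<le> 3 \<ell>(z)\<close> whenever
  \<open>|t - z| \<le> 1\<close>. A second-order Taylor expansion then gives, for data of norm at most 1,
  the local quadratic bound \<open>F\<^sub>m(w + u) \<le> F\<^sub>m(w) + \<langle>\<nabla>F\<^sub>m(w), u\<rangle> + 3/2 F\<^sub>m(w) \<parallel>u\<parallel>\<^sup>2\<close>
  for \<open>\<parallel>u\<parallel> \<le> 1\<close>, together with \<open>\<parallel>\<nabla>F\<^sub>m(w)\<parallel> \<le> F\<^sub>m(w)\<close>. If \<open>\<eta> F\<^sub>m(w) \<le> 1/4\<close>, the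
  gradient step has length at most \<open>1/4\<close> and the bound shows that it does not increase
  \<open>F\<^sub>m\<close>; so the sublevel set \<open>{F\<^sub>m \<le> 1/(4\<eta>)}\<close> is invariant under local steps. Finally
  \<open>F\<^sub>m \<le> M F\<close> places \<open>w\<^sub>r\<close> in that sublevel set.
\<close>

definition logloss_deriv :: "real \<Rightarrow> real" where
  "logloss_deriv z = - 1 / (1 + exp z)"

definition logloss_deriv2 :: "real \<Rightarrow> real" where
  "logloss_deriv2 z = exp z / (1 + exp z)\<^sup>2"

lemma DERIV_logloss: "DERIV logloss z :> logloss_deriv z"
proof -
  have "DERIV (\<lambda>z. ln (1 + exp (- z))) z :> 1 / (1 + exp (- z)) * (exp (- z) * - 1)"
    by (auto intro!: derivative_eq_intros simp: add_pos_pos)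
  also have "1 / (1 + exp (- z)) * (exp (- z) * - 1) = logloss_deriv z"
    unfolding logloss_deriv_def by (simp add: field_simps exp_minus)
  finally show ?thesis
    unfolding logloss_def [abs_def] .
qed

lemma DERIV_logloss_deriv: "DERIV logloss_deriv z :> logloss_deriv2 z"
  unfolding logloss_deriv_def [abs_def] logloss_deriv2_def
  by (auto intro!: derivative_eq_intros simp: power2_eq_square add_nonneg_eq_0_iff)

lemma logloss_nonneg: "0 \<le> logloss z"
  unfolding logloss_def by simp

lemma abs_logloss_deriv_le: "\<bar>logloss_deriv z\<bar> \<le> logloss z"
proof -
  have "\<bar>logloss_deriv z\<bar> = exp (- z) / (1 + exp (- z))"
    unfolding logloss_deriv_def by (simp add: exp_minus field_simps add_pos_pos)
  also have "\<dots> \<le> ln (exp (- z) + 1)"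
    by (rule ln_add1_ge) simp
  finally show ?thesis
    unfolding logloss_def by (simp add: add.commute)
qed

lemma logloss_deriv2_le:
  assumes "\<bar>t - z\<bar> \<le> 1"
  shows "logloss_deriv2 t \<le> 3 * logloss z"
proof -
  have "exp z \<le> exp t * exp 1"
    using assms by (simp flip: exp_add)
  also have "\<dots> \<le> exp t * 3"
    using exp_le by simp
  finally have "1 + exp z \<le> 3 * (1 + exp t)" by simp
  then have "1 / (1 + exp t) \<le> 3 / (1 + exp z)"
    by (simp add: field_simps add_pos_pos)
  moreover have "logloss_deriv2 t \<le> 1 / (1 + exp t)"
    unfolding logloss_deriv2_def by (simp add: power2_eq_square field_simps add_pos_pos)
  moreover have "1 / (1 + exp z) \<le> logloss z"
    using abs_logloss_deriv_le [of z] unfolding logloss_deriv_def by (simp add: add_pos_pos)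
  ultimately show ?thesis by linarith
qed

lemma logloss_second_order_bound:
  assumes "\<bar>d\<bar> \<le> 1"
  shows "logloss (z + d) \<le> logloss z + logloss_deriv z * d + 3 / 2 * logloss z * d\<^sup>2"
proof (cases "d = 0")
  case False
  define D :: "nat \<Rightarrow> real \<Rightarrow> real" where
    "D k = (if k = 0 then logloss else if k = 1 then logloss_deriv else logloss_deriv2)" for k
  have "\<forall>k t. k < 2 \<and> z - 1 \<le> t \<and> t \<le> z + 1 \<longrightarrow> DERIV (D k) t :> D (Suc k) t"
    by (auto simp: D_def less_2_cases_iff DERIV_logloss DERIV_logloss_deriv)
  then have "\<exists>t. (if z + d < z then z + d < t \<and> t < z else z < t \<and> t < z + d) \<and>
      logloss (z + d)
        = (\<Sum>k<2. D k z / fact k * (z + d - z) ^ k) + D 2 t / fact 2 * (z + d - z) ^ 2"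
    by (rule Taylor [rotated 2]) (use assms False in \<open>auto simp: D_def\<close>)
  then obtain t where t: "if z + d < z then z + d < t \<and> t < z else z < t \<and> t < z + d"
    and taylor: "logloss (z + d) = (\<Sum>k<2. D k z / fact k * d ^ k) + D 2 t / fact 2 * d\<^sup>2"
    by auto
  have "\<bar>t - z\<bar> \<le> 1"
    using t assms by (auto split: if_splits)
  have "logloss_deriv2 t / 2 * d\<^sup>2 \<le> 3 / 2 * logloss z * d\<^sup>2"
    using logloss_deriv2_le [OF \<open>\<bar>t - z\<bar> \<le> 1\<close>] by (intro mult_right_mono) auto
  moreover have
    "logloss (z + d) = logloss z + logloss_deriv z * d + logloss_deriv2 t / 2 * d\<^sup>2"
    using taylor by (simp add: D_def numeral_2_eq_2)
  ultimately show ?thesis by linarith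
qed simp

lemma grad_eqI:
  assumes "(f has_derivative (\<lambda>h. g \<bullet> h)) (at w)"
  shows "grad f w = g"
proof -
  have "(f has_derivative (\<lambda>h. grad f w \<bullet> h)) (at w)"
    unfolding grad_def using assms by (rule someI)
  from has_derivative_unique [OF this assms] show ?thesis
    by (metis vector_eq_rdot)
qed

definition Floc_grad :: "nat \<Rightarrow> (nat \<Rightarrow> nat \<Rightarrow> 'a::real_inner) \<Rightarrow> nat \<Rightarrow> 'a \<Rightarrow> 'a" where
  "Floc_grad n x m w = (1 / real n) *\<^sub>R (\<Sum>i<n. logloss_deriv (w \<bullet> x m i) *\<^sub>R x m i)"

lemma has_derivative_Floc: "(Floc n x m has_derivative (\<lambda>h. Floc_grad n x m w \<bullet> h)) (at w)"
proof -
  have "((\<lambda>w. logloss (w \<bullet> x m i)) has_derivative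
      (\<lambda>h. (h \<bullet> x m i) * logloss_deriv (w \<bullet> x m i))) (at w)" for i
    by (rule DERIV_compose_FDERIV [OF DERIV_logloss]) (auto intro!: derivative_eq_intros)
  then have "(Floc n x m has_derivative
      (\<lambda>h. 1 / real n * (\<Sum>i<n. (h \<bullet> x m i) * logloss_deriv (w \<bullet> x m i)))) (at w)"
    unfolding Floc_def [abs_def] by (intro has_derivative_mult_right has_derivative_sum)
  moreover have "(\<Sum>i<n. (h \<bullet> x m i) * logloss_deriv (w \<bullet> x m i))
      = (\<Sum>i<n. logloss_deriv (w \<bullet> x m i) *\<^sub>R x m i) \<bullet> h" for h
    by (simp add: inner_sum_right inner_commute mult.commute)
  ultimately show ?thesis
    by (simp add: Floc_grad_def)
qed

lemma grad_Floc: "grad (Floc n x m) w = Floc_grad n x m w"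
  by (rule grad_eqI [OF has_derivative_Floc])

lemma Floc_nonneg: "0 \<le> Floc n x m w"
  unfolding Floc_def by (intro mult_nonneg_nonneg sum_nonneg logloss_nonneg) auto

lemma norm_Floc_grad_le:
  assumes "\<And>i. i < n \<Longrightarrow> norm (x m i) \<le> 1"
  shows "norm (Floc_grad n x m w) \<le> Floc n x m w"
proof -
  have "norm (\<Sum>i<n. logloss_deriv (w \<bullet> x m i) *\<^sub>R x m i)
      \<le> (\<Sum>i<n. \<bar>logloss_deriv (w \<bullet> x m i)\<bar> * norm (x m i))"
    by (rule norm_sum [THEN order_trans]) simp
  also have "\<dots> \<le> (\<Sum>i<n. logloss (w \<bullet> x m i))"
    using assms by (intro sum_mono order_trans [OF mult_left_le abs_logloss_deriv_le]) auto
  finally show ?thesis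
    unfolding Floc_grad_def Floc_def by (simp add: divide_right_mono)
qed

lemma Floc_quadratic_upper_bound:
  assumes x: "\<And>i. i < n \<Longrightarrow> norm (x m i) \<le> 1" and u: "norm u \<le> 1"
  shows "Floc n x m (w + u)
    \<le> Floc n x m w + Floc_grad n x m w \<bullet> u + 3 / 2 * Floc n x m w * (norm u)\<^sup>2"
proof -
  have sample: "logloss ((w + u) \<bullet> x m i) \<le> logloss (w \<bullet> x m i)
      + logloss_deriv (w \<bullet> x m i) * (u \<bullet> x m i) + 3 / 2 * logloss (w \<bullet> x m i) * (norm u)\<^sup>2"
    if "i < n" for i
  proof -
    have "\<bar>u \<bullet> x m i\<bar> \<le> norm u"
      using Cauchy_Schwarz_ineq2 [of u "x m i"] x [OF that] norm_ge_zero [of u]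
      by (meson mult_left_le order_trans)
    then have "\<bar>u \<bullet> x m i\<bar> \<le> 1" and "(u \<bullet> x m i)\<^sup>2 \<le> (norm u)\<^sup>2"
      using u by (auto simp flip: abs_le_square_iff)
    then have "3 / 2 * logloss (w \<bullet> x m i) * (u \<bullet> x m i)\<^sup>2
        \<le> 3 / 2 * logloss (w \<bullet> x m i) * (norm u)\<^sup>2"
      by (intro mult_left_mono) (auto simp: logloss_nonneg)
    with logloss_second_order_bound [OF \<open>\<bar>u \<bullet> x m i\<bar> \<le> 1\<close>, of "w \<bullet> x m i"]
    show ?thesis
      by (simp add: inner_add_left)
  qed
  have "Floc n x m (w + u) \<le> 1 / real n * (\<Sum>i<n. logloss (w \<bullet> x m i)
      + logloss_deriv (w \<bullet> x m i) * (u \<bullet> x m i) + 3 / 2 * logloss (w \<bullet> x m i) * (norm u)\<^sup>2)"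
    unfolding Floc_def using sample by (intro mult_left_mono sum_mono) auto
  also have "\<dots> = Floc n x m w
      + 1 / real n * (\<Sum>i<n. logloss_deriv (w \<bullet> x m i) * (u \<bullet> x m i))
      + 3 / 2 * Floc n x m w * (norm u)\<^sup>2"
    by (simp add: Floc_def sum.distrib distrib_left
        flip: sum_distrib_left sum_distrib_right sum_divide_distrib)
  also have "1 / real n * (\<Sum>i<n. logloss_deriv (w \<bullet> x m i) * (u \<bullet> x m i))
      = Floc_grad n x m w \<bullet> u"
    by (simp add: Floc_grad_def inner_sum_right inner_commute)
  finally show ?thesis .
qed

lemma Floc_gradient_step_le:
  assumes x: "\<And>i. i < n \<Longrightarrow> norm (x m i) \<le> 1"
    and eta: "0 < eta" and small: "Floc n x m w \<le> 1 / (4 * eta)"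
  shows "Floc n x m (w - eta *\<^sub>R grad (Floc n x m) w) \<le> Floc n x m w"
proof -
  define F g where "F = Floc n x m w" and "g = Floc_grad n x m w"
  have etaF: "eta * F \<le> 1 / 4"
    using eta small by (simp add: F_def field_simps)
  have "norm (eta *\<^sub>R g) \<le> eta * F"
    using eta norm_Floc_grad_le [where x = x and m = m, OF x] by (simp add: F_def g_def)
  then have "norm (- (eta *\<^sub>R g)) \<le> 1"
    using etaF by simp
  from Floc_quadratic_upper_bound [where n = n and x = x and m = m and w = w, OF x this]
  have "Floc n x m (w - eta *\<^sub>R g)
      \<le> F + g \<bullet> (- (eta *\<^sub>R g)) + 3 / 2 * F * (norm (- (eta *\<^sub>R g)))\<^sup>2"
    by (simp add: F_def g_def)
  also have "\<dots> = F - eta * (norm g)\<^sup>2 + 3 / 2 * (eta * F) * (eta * (norm g)\<^sup>2)"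
    using eta by (simp add: dot_square_norm power_mult_distrib power2_eq_square)
  also have "\<dots> \<le> F - eta * (norm g)\<^sup>2 + 3 / 2 * (1 / 4) * (eta * (norm g)\<^sup>2)"
    using etaF eta by (intro add_left_mono mult_left_mono mult_right_mono) auto
  also have "\<dots> \<le> F"
    using eta by simp
  finally show ?thesis
    by (simp add: F_def g_def grad_Floc)
qed

lemma local_iter_decreasing:
  assumes step: "\<And>u. f u \<le> c \<Longrightarrow> f (u - eta *\<^sub>R grad f u) \<le> f u" and "f v \<le> c"
  shows "f (local_iter eta f v (Suc k)) \<le> f (local_iter eta f v k)"
proof -
  have "f (local_iter eta f v k) \<le> c" for k
    by (induction k) (use assms in \<open>auto intro: order_trans\<close>)
  with step show ?thesis
    by simp
qed

lemma Floc_le_Fglob: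
  assumes "m < M"
  shows "Floc n x m w \<le> real M * Fglob M n x w"
proof -
  have "Floc n x m w \<le> (\<Sum>m'<M. Floc n x m' w)"
    using assms by (intro member_le_sum Floc_nonneg) auto
  then show ?thesis
    using assms by (simp add: Fglob_def)
qed

theorem lemma4p6:
  fixes x :: "nat \<Rightarrow> nat \<Rightarrow> real ^ 'd"
    and w0 :: "real ^ 'd"
    and M n K r :: nat
    and eta :: real
  assumes "M \<ge> 1" and "n \<ge> 1"
    and "\<And>m i. m < M \<Longrightarrow> i < n \<Longrightarrow> norm (x m i) \<le> 1"
    and "\<exists>w. \<forall>m<M. \<forall>i<n. w \<bullet> x m i > 0"
    and "eta > 0"
    and "Fglob M n x (localGD M n x eta K w0 r) \<le> 1 / (4 * eta * real M)"
  shows "\<forall>m<M. \<forall>k<K.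
           Floc n x m (local_iter eta (Floc n x m) (localGD M n x eta K w0 r) (Suc k))
         \<le> Floc n x m (local_iter eta (Floc n x m) (localGD M n x eta K w0 r) k)"
proof (intro allI impI)
  fix m k
  assume "m < M"
  define v where "v = localGD M n x eta K w0 r"
  have data: "\<And>i. i < n \<Longrightarrow> norm (x m i) \<le> 1"
    using assms(3) \<open>m < M\<close> by blast
  have "Floc n x m v \<le> real M * Fglob M n x v"
    using \<open>m < M\<close> by (rule Floc_le_Fglob)
  also have "\<dots> \<le> 1 / (4 * eta)"
    using assms(1,5,6) by (simp add: v_def field_simps)
  finally have "Floc n x m v \<le> 1 / (4 * eta)" .
  with Floc_gradient_step_le [where n = n and x = x and m = m, OF data assms(5)]
  show "Floc n x m (local_iter eta (Floc n x m) (localGD M n x eta K w0 r) (Suc k))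
      \<le> Floc n x m (local_iter eta (Floc n x m) (localGD M n x eta K w0 r) k)"
    unfolding v_def by (rule local_iter_decreasing)
qed

end
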